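(* Let $\gamma>0$ and let $\mathcal{W}_\gamma\subseteq(\mathbb{C}^M)^G$ be either the sum-power set $\{\mathbf{w}:\sum_{g\in\mathcal{G}}\|\mathbf{w}_g\|_2^2\le\gamma\}$ or the per-antenna-power set $\{\mathbf{w}:\sum_{g\in\mathcal{G}}|[\mathbf{w}_g]_m|^2\le\gamma,\ m=1,\dots,M\}$, where $[\mathbf{w}_g]_m$ is the $m$-th entry of $\mathbf{w}_g$. Consider $$V_{\mathrm{MMF}}=\sup_{\mathbf{w}\in\mathcal{W}_\gamma}\ \min_{g\in\mathcal{G},\,i\in\mathcal{N}_g}\ \inf_{\mathbf{e}_{ig}\in\mathcal{S}_{ig}}\mathrm{SINR}_{ig}(\mathbf{w},\mathbf{e}_{ig}),$$ $$V_{\mathrm{App}}=\sup\big\{t\ge 0:\ \exists\,\mathbf{w}\in\mathcal{W}_\gamma \text{ with } \zeta_{ig}(\mathbf{w},t)-|\mathbf{w}_g^H\hat{\mathbf{h}}_{ig}|\le 0\ \ \forall i\in\mathcal{N}_g,g\in\mathcal{G}\big\}.$$ Then: (a) if $t\ge0$ and $\mathbf{w}\in\mathcal{W}_\gamma$ satisfy $\zeta_{ig}(\mathbf{w},t)-|\mathbf{w}_g^H\hat{\mathbf{h}}_{ig}|\le 0$ for all $i\in\mathcal{N}_g,g\in\mathcal{G}$, then $\mathrm{SINR}_{ig}(\mathbf{w},\mathbf{e}_{ig})\ge t$ for all $i\in\mathcal{N}_g$, $g\in\mathcal{G}$, $\mathbf{e}_{ig}\in\mathcal{S}_{ig}$;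 (b) $V_{\mathrm{App}}\le V_{\mathrm{MMF}}$; (c) if $G=1$ and $\mathbf{C}_{i1}=\mu^{-2}\mathbf{I}_M$ for all $i\in\mathcal{N}_1$ with a constant $\mu>0$, then $V_{\mathrm{App}}=V_{\mathrm{MMF}}$.
   Context: Setting: $M\ge1$, $G\ge 1$, $\mathcal{G}=\{1,\dots,G\}$, finite nonempty index sets $\mathcal{N}_g$; for $i\in\mathcal{N}_g$, $g\in\mathcal{G}$: $\hat{\mathbf{h}}_{ig}\in\mathbb{C}^M$, $\sigma_{ig}>0$, $\mathbf{C}_{ig}$ Hermitian positive definite, $\varepsilon_{ig}=1/\sqrt{\lambda_{\min}(\mathbf{C}_{ig})}$, $\mathcal{S}_{ig}=\{\mathbf{e}\in\mathbb{C}^M:\mathbf{e}^H\mathbf{C}_{ig}\mathbf{e}\le 1\}$. For $\mathbf{w}=(\mathbf{w}_l)_{l\in\mathcal{G}}$, $\mathbf{w}_l\in\mathbb{C}^M$: $$\mathrm{SINR}_{ig}(\mathbf{w},\mathbf{e}_{ig})=\frac{|\mathbf{w}_g^H(\hat{\mathbf{h}}_{ig}+\mathbf{e}_{ig})|^2}{\sum_{l\in\mathcal{G},l\ne g}|\mathbf{w}_l^H(\hat{\mathbf{h}}_{ig}+\mathbf{e}_{ig})|^2+\sigma_{ig}^2},$$ and for $\tau\ge0$, $$\zeta_{ig}(\mathbf{w},\tau)=\varepsilon_{ig}\|\mathbf{w}_g\|_2+\sqrt{\tau}\,\sqrt{\sum_{l\in\mathcal{G},l\ne g}\big(|\mathbf{w}_l^H\hat{\mathbf{h}}_{ig}|+\varepsilon_{ig}\|\mathbf{w}_l\|_2\big)^2+\sigma_{ig}^2}.$$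 *)

theory Defs
  imports "HOL-Analysis.Analysis"
begin

text \<open>Vectors in C^M are modelled as complex ^ 'm (M = CARD('m) \<ge> 1),
 M x M matrices as complex ^ 'm ^ 'm. Groups are 1..G, beamformers
 w :: nat \<Rightarrow> complex ^ 'm (only w 1, ..., w G matter). Users of group g are
 the elements of N g :: 'u set; per-user data are indexed by (i, g).\<close>

definition hip :: "complex ^ 'm \<Rightarrow> complex ^ 'm \<Rightarrow> complex" where
  "hip x y = (\<Sum>j\<in>UNIV. cnj (x $ j) * y $ j)"

definition hermitian :: "complex ^ 'm ^ 'm \<Rightarrow> bool" where
  "hermitian A \<longleftrightarrow> (\<forall>i j. A $ i $ j = cnj (A $ j $ i))"

definition pos_def_herm :: "complex ^ 'm ^ 'm \<Rightarrow> bool" where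
  "pos_def_herm A \<longleftrightarrow> hermitian A \<and> (\<forall>x. x \<noteq> 0 \<longrightarrow> Re (hip x (A *v x)) > 0)"

text \<open>Smallest eigenvalue (eigenvalues of a Hermitian matrix are real).\<close>
definition lambda_min :: "complex ^ 'm ^ 'm \<Rightarrow> real" where
  "lambda_min A = Min {r::real. \<exists>x. x \<noteq> 0 \<and> A *v x = complex_of_real r *s x}"

definition eps :: "complex ^ 'm ^ 'm \<Rightarrow> real" where
  "eps A = 1 / sqrt (lambda_min A)"

definition ellipsoid :: "complex ^ 'm ^ 'm \<Rightarrow> (complex ^ 'm) set" where
  "ellipsoid A = {e. Re (hip e (A *v e)) \<le> 1}"

definition sinr :: "nat \<Rightarrow> (nat \<Rightarrow> complex ^ 'm) \<Rightarrow> complex ^ 'm \<Rightarrow> real \<Rightarrow> nat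
    \<Rightarrow> complex ^ 'm \<Rightarrow> real" where
  "sinr G w h \<sigma> g e =
     (cmod (hip (w g) (h + e)))\<^sup>2 /
     ((\<Sum>l\<in>{1..G} - {g}. (cmod (hip (w l) (h + e)))\<^sup>2) + \<sigma>\<^sup>2)"

definition zeta :: "nat \<Rightarrow> (nat \<Rightarrow> complex ^ 'm) \<Rightarrow> complex ^ 'm \<Rightarrow> real \<Rightarrow> real \<Rightarrow> nat
    \<Rightarrow> real \<Rightarrow> real" where
  "zeta G w h \<sigma> \<epsilon> g t =
     \<epsilon> * norm (w g) +
     sqrt t * sqrt ((\<Sum>l\<in>{1..G} - {g}. (cmod (hip (w l) h) + \<epsilon> * norm (w l))\<^sup>2) + \<sigma>\<^sup>2)"

datatype power_constraint = SumPower | PerAntenna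

definition Wset :: "power_constraint \<Rightarrow> real \<Rightarrow> nat \<Rightarrow> (nat \<Rightarrow> complex ^ 'm) set" where
  "Wset pc \<gamma> G = (case pc of
      SumPower \<Rightarrow> {w. (\<Sum>g\<in>{1..G}. (norm (w g))\<^sup>2) \<le> \<gamma>}
    | PerAntenna \<Rightarrow> {w. \<forall>m. (\<Sum>g\<in>{1..G}. (cmod (w g $ m))\<^sup>2) \<le> \<gamma>})"

definition V_MMF :: "power_constraint \<Rightarrow> real \<Rightarrow> nat \<Rightarrow> (nat \<Rightarrow> 'u set)
    \<Rightarrow> ('u \<Rightarrow> nat \<Rightarrow> complex ^ 'm) \<Rightarrow> ('u \<Rightarrow> nat \<Rightarrow> real)
    \<Rightarrow> ('u \<Rightarrow> nat \<Rightarrow> complex ^ 'm ^ 'm) \<Rightarrow> real" where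
  "V_MMF pc \<gamma> G N h \<sigma> C =
     (SUP w\<in>Wset pc \<gamma> G.
        Min ((\<lambda>(i, g). INF e\<in>ellipsoid (C i g). sinr G w (h i g) (\<sigma> i g) g e)
             ` {(i, g). g \<in> {1..G} \<and> i \<in> N g}))"

definition V_App :: "power_constraint \<Rightarrow> real \<Rightarrow> nat \<Rightarrow> (nat \<Rightarrow> 'u set)
    \<Rightarrow> ('u \<Rightarrow> nat \<Rightarrow> complex ^ 'm) \<Rightarrow> ('u \<Rightarrow> nat \<Rightarrow> real)
    \<Rightarrow> ('u \<Rightarrow> nat \<Rightarrow> complex ^ 'm ^ 'm) \<Rightarrow> real" where
  "V_App pc \<gamma> G N h \<sigma> C =
     Sup {t. t \<ge> 0 \<and> (\<exists>w\<in>Wset pc \<gamma> G. \<forall>g\<in>{1..G}. \<forall>i\<in>N g.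
              zeta G w (h i g) (\<sigma> i g) (eps (C i g)) g t - cmod (hip (w g) (h i g)) \<le> 0)}"

end

theory Submission
  imports Defs
begin

text \<open>Every error \<open>e\<close> in the ellipsoid of \<open>C\<close> has \<open>\<parallel>e\<parallel> \<le> \<epsilon> = \<lambda>_min(C)^(-1/2)\<close> by the
Rayleigh-quotient characterisation of \<open>\<lambda>_min\<close>, so by Cauchy--Schwarz every \<open>|w_l^H (h + e)|\<close>
lies within \<open>\<epsilon> \<parallel>w_l\<parallel>\<close> of \<open>|w_l^H h|\<close>. Bounding the useful signal from below and the
interference from above shows that the \<open>\<zeta>\<close>-condition forces \<open>SINR \<ge> t\<close> for every admissible
error, which is (a); (b) follows by taking suprema. For a single group with spherical
uncertainty of radius \<open>\<mu>\<close> there is no interference and the bound is attained: an error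
aligned with \<open>w_1\<close> either annihilates the signal (if \<open>|w_1^H h| < \<mu> \<parallel>w_1\<parallel>\<close>) or shrinks it
by exactly \<open>\<mu> \<parallel>w_1\<parallel>\<close>. Hence the worst-case SINR of every beamformer is either zero or itself
feasible for the approximation, giving (c).\<close>

subsection \<open>The Hermitian form\<close>

lemma hip_add_right: "hip x (y + z) = hip x y + hip x z"
  unfolding hip_def by (simp add: sum.distrib distrib_left)

lemma hip_smult_right: "hip x (c *s y) = c * hip x y"
  unfolding hip_def by (simp add: sum_distrib_left mult.left_commute)

lemma hip_smult_left: "hip (c *s x) y = cnj c * hip x y"
  unfolding hip_def by (simp add: sum_distrib_left mult.assoc)

lemma norm_vec_power2: "(norm (x::complex^'m))\<^sup>2 = (\<Sum>j\<in>UNIV. (cmod (x $ j))\<^sup>2)"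
  by (simp add: norm_vec_def L2_set_def sum_nonneg)

lemma norm_smult_vec: "norm (c *s (x::complex^'m)) = cmod c * norm x"
  by (simp add: norm_vec_def L2_set_def norm_mult power_mult_distrib
      sum_distrib_left[symmetric] real_sqrt_mult)

lemma hip_self: "hip x x = complex_of_real ((norm x)\<^sup>2)"
  unfolding hip_def norm_vec_power2
  by (simp add: complex_norm_square mult.commute of_real_sum del: of_real_power)

lemma Re_hip_eq_inner: "Re (hip x y) = x \<bullet> y"
  unfolding hip_def inner_vec_def inner_complex_def by (simp add: Re_sum)

lemma hermitian_hip_mult:
  assumes "hermitian C"
  shows "hip x (C *v y) = hip (C *v x) y"
proof -
  have C_cnj: "cnj (C $ i $ j) = C $ j $ i" for i j
    using assms unfolding hermitian_def by (metis complex_cnj_cnj)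
  have "hip x (C *v y) = (\<Sum>j\<in>UNIV. \<Sum>k\<in>UNIV. cnj (x $ j) * C $ j $ k * y $ k)"
    unfolding hip_def matrix_vector_mult_def by (simp add: sum_distrib_left mult.assoc)
  also have "\<dots> = (\<Sum>k\<in>UNIV. \<Sum>j\<in>UNIV. cnj (x $ j) * C $ j $ k * y $ k)"
    by (rule sum.swap)
  also have "\<dots> = hip (C *v x) y"
    unfolding hip_def matrix_vector_mult_def
    by (simp add: sum_distrib_left C_cnj mult.commute mult.left_commute)
  finally show ?thesis .
qed

lemma hermitian_inner_mult: "hermitian C \<Longrightarrow> x \<bullet> (C *v y) = (C *v x) \<bullet> y"
  by (metis Re_hip_eq_inner hermitian_hip_mult)

lemma norm_hip_le: "cmod (hip x y) \<le> norm x * norm y"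
proof (cases "hip x y = 0")
  case False
  define u where "u = cnj (hip x y) / complex_of_real (cmod (hip x y))"
  have "hip x (u *s y) = complex_of_real (cmod (hip x y))"
    unfolding hip_smult_right u_def using False
    by (simp add: complex_norm_square[symmetric] power2_eq_square field_simps)
  then have "cmod (hip x y) = x \<bullet> (u *s y)" by (metis Re_hip_eq_inner Re_complex_of_real)
  also have "\<dots> \<le> norm x * norm (u *s y)" by (rule norm_cauchy_schwarz)
  also have "norm (u *s y) = norm y"
    using False unfolding norm_smult_vec u_def by (simp add: norm_divide)
  finally show ?thesis .
qed simp

lemma norm_hip_add_right_le: "cmod (hip x (y + e)) \<le> cmod (hip x y) + norm x * norm e"
  using norm_triangle_ineq[of "hip x y" "hip x e"] norm_hip_le[of x e]
  unfolding hip_add_right by linarith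

lemma norm_hip_add_right_ge: "cmod (hip x y) - norm x * norm e \<le> cmod (hip x (y + e))"
  using norm_diff_ineq[of "hip x y" "hip x e"] norm_hip_le[of x e]
  unfolding hip_add_right by linarith

subsection \<open>The smallest eigenvalue of a positive definite matrix\<close>

lemma matrix_vector_mult_scaleR: "C *v (a *\<^sub>R x) = a *\<^sub>R (C *v (x::complex^'m))"
  by (simp add: vec_eq_iff matrix_vector_mult_def scaleR_sum_right)

lemma of_real_smult_eq_scaleR: "complex_of_real r *s (x::complex^'m) = r *\<^sub>R x"
  unfolding vec_eq_iff vector_scaleR_component vector_smult_component
  by (simp add: scaleR_conv_of_real)

lemma pos_def_herm_quadratic_form_min:
  fixes C :: "complex^'m^'m"
  assumes "pos_def_herm C"
  obtains x0 where "norm x0 = 1" and "x0 \<bullet> (C *v x0) > 0"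
    and "\<And>x. (x0 \<bullet> (C *v x0)) * (norm x)\<^sup>2 \<le> x \<bullet> (C *v x)"
proof -
  define q where "q x = x \<bullet> (C *v x)" for x :: "complex^'m"
  have q_pos: "x \<noteq> 0 \<Longrightarrow> q x > 0" for x
    using assms unfolding pos_def_herm_def q_def by (simp add: Re_hip_eq_inner)
  have "continuous_on (sphere 0 1) q"
    unfolding q_def inner_vec_def matrix_vector_mult_def inner_complex_def
    by (intro continuous_intros)
  moreover obtain u :: "complex^'m" where "norm u = 1" using vector_choose_size[of 1] by auto
  then have "sphere (0::complex^'m) 1 \<noteq> {}" by auto
  ultimately obtain x0 where x0: "x0 \<in> sphere 0 1" and min: "\<forall>y\<in>sphere 0 1. q x0 \<le> q y"
    using continuous_attains_inf[OF compact_sphere] by blast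
  have "q x0 * (norm x)\<^sup>2 \<le> q x" for x
  proof (cases "x = 0")
    case False
    have "q x = (norm x)\<^sup>2 * q ((1 / norm x) *\<^sub>R x)"
      using False unfolding q_def matrix_vector_mult_scaleR by (simp add: power2_eq_square)
    moreover have "q x0 \<le> q ((1 / norm x) *\<^sub>R x)" using min False by simp
    ultimately show ?thesis by (metis mult.commute mult_right_mono zero_le_power2)
  qed (simp add: q_def)
  moreover have "q x0 > 0" using q_pos[of x0] x0 by (metis mem_sphere_0 norm_zero zero_neq_one)
  ultimately show thesis using that x0 unfolding q_def by simp
qed

text \<open>Perturbing the minimiser along the residual \<open>v = C x0 - (x0 \<bullet> C x0) x0\<close> gives
\<open>0 \<le> 2 s \<parallel>v\<parallel>^2 + s^2 K\<close> for all real \<open>s\<close>, which forces \<open>v = 0\<close>.\<close>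

lemma hermitian_quadratic_form_minimiser_eigenvector:
  fixes C :: "complex^'m^'m"
  assumes herm: "hermitian C" and x0: "norm x0 = 1"
    and min: "\<And>x. (x0 \<bullet> (C *v x0)) * (norm x)\<^sup>2 \<le> x \<bullet> (C *v x)"
  shows "C *v x0 = (x0 \<bullet> (C *v x0)) *\<^sub>R x0"
proof -
  define lam where "lam = x0 \<bullet> (C *v x0)"
  define v where "v = C *v x0 - lam *\<^sub>R x0"
  define K where "K = v \<bullet> (C *v v) - lam * (v \<bullet> v)"
  have x0x0: "x0 \<bullet> x0 = 1" using x0 by (simp add: power2_norm_eq_inner[symmetric])
  have vv: "v \<bullet> v = v \<bullet> (C *v x0) - lam * (v \<bullet> x0)"
    unfolding v_def by (simp add: inner_diff_right)
  have key: "0 \<le> 2 * s * (v \<bullet> v) + s\<^sup>2 * K" for s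
  proof -
    have b: "lam * (norm (x0 + s *\<^sub>R v))\<^sup>2 \<le> (x0 + s *\<^sub>R v) \<bullet> (C *v (x0 + s *\<^sub>R v))"
      using min unfolding lam_def .
    have e1: "(x0 + s *\<^sub>R v) \<bullet> (C *v (x0 + s *\<^sub>R v))
          = lam + 2 * s * (v \<bullet> (C *v x0)) + s\<^sup>2 * (v \<bullet> (C *v v))"
      unfolding lam_def matrix_vector_right_distrib matrix_vector_mult_scaleR
      using hermitian_inner_mult[OF herm, of x0 v]
      by (simp add: inner_add_left inner_add_right inner_commute power2_eq_square algebra_simps)
    have e2: "(norm (x0 + s *\<^sub>R v))\<^sup>2 = 1 + 2 * s * (v \<bullet> x0) + s\<^sup>2 * (v \<bullet> v)"
      unfolding power2_norm_eq_inner using x0x0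
      by (simp add: inner_add_left inner_add_right inner_commute power2_eq_square algebra_simps
          del: inner_scaleR_left inner_scaleR_right inner_real_def) (simp add: inner_commute)
    show ?thesis using b unfolding e1 e2 K_def vv by (simp add: algebra_simps)
  qed
  have "v = 0"
  proof (rule ccontr)
    assume "v \<noteq> 0"
    then have vv_pos: "v \<bullet> v > 0" by simp
    show False
    proof (cases "K \<le> 0")
      case True
      then show False using key[of "-1"] vv_pos by simp
    next
      case False
      have "0 \<le> - ((v \<bullet> v)\<^sup>2 / K)"
        using key[of "- (v \<bullet> v / K)"] False by (simp add: power2_eq_square field_simps)
      moreover have "(v \<bullet> v)\<^sup>2 / K > 0" using False vv_pos by simp
      ultimately show False by simp
    qed
  qed
  then show ?thesis unfolding v_def lam_def by simp
qed

lemma hermitian_eigenvectors_orthogonal: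
  assumes herm: "hermitian C"
    and "C *v x = complex_of_real r *s x" and "C *v y = complex_of_real s *s y" and "r \<noteq> s"
  shows "hip x y = 0"
proof -
  have "hip (C *v x) y = complex_of_real r * hip x y" using assms(2) by (simp add: hip_smult_left)
  moreover have "hip x (C *v y) = complex_of_real s * hip x y"
    using assms(3) by (simp add: hip_smult_right)
  ultimately have "(complex_of_real r - complex_of_real s) * hip x y = 0"
    using hermitian_hip_mult[OF herm, of x y] by (simp add: algebra_simps)
  then show ?thesis using assms(4) by simp
qed

lemma hermitian_finite_eigenvalues:
  fixes C :: "complex^'m^'m"
  assumes herm: "hermitian C"
  shows "finite {r::real. \<exists>x. x \<noteq> 0 \<and> C *v x = complex_of_real r *s x}" (is "finite ?E")
proof -
  define f where "f r = (SOME x. x \<noteq> 0 \<and> C *v x = complex_of_real r *s x)" for r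
  have f: "f r \<noteq> 0 \<and> C *v f r = complex_of_real r *s f r" if "r \<in> ?E" for r
    using someI_ex[of "\<lambda>x. x \<noteq> 0 \<and> C *v x = complex_of_real r *s x"] that
    unfolding f_def by blast
  have f_orth: "hip (f r) (f s) = 0" if "r \<in> ?E" "s \<in> ?E" "r \<noteq> s" for r s
    using f[OF that(1)] f[OF that(2)] hermitian_eigenvectors_orthogonal[OF herm _ _ that(3)]
    by simp
  have "inj_on f ?E"
  proof (rule inj_onI, rule ccontr)
    fix r s assume r: "r \<in> ?E" and s: "s \<in> ?E" and eq: "f r = f s" and "r \<noteq> s"
    then have "hip (f r) (f r) = 0" using f_orth[OF r s] by simp
    then show False using f[OF r] by (simp add: hip_self)
  qed
  moreover have "pairwise orthogonal (f ` ?E)"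
  proof (rule pairwiseI)
    fix a b assume "a \<in> f ` ?E" "b \<in> f ` ?E" "a \<noteq> b"
    then obtain r s where "r \<in> ?E" "s \<in> ?E" "r \<noteq> s" "a = f r" "b = f s" by auto
    then show "orthogonal a b"
      unfolding orthogonal_def Re_hip_eq_inner[symmetric] using f_orth by simp
  qed
  moreover have "0 \<notin> f ` ?E"
  proof
    assume "0 \<in> f ` ?E"
    then obtain r where r: "r \<in> ?E" and "0 = f r" by (rule imageE)
    then show False using f[OF r] by simp
  qed
  ultimately have "finite (f ` ?E)"
    by (intro independent_imp_finite pairwise_orthogonal_independent)
  then show ?thesis using \<open>inj_on f ?E\<close> by (rule finite_imageD)
qed

lemma pos_def_herm_lambda_min:
  fixes C :: "complex^'m^'m"
  assumes pd: "pos_def_herm C"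
  shows "lambda_min C > 0" and "lambda_min C * (norm x)\<^sup>2 \<le> Re (hip x (C *v x))"
proof -
  have herm: "hermitian C" using pd unfolding pos_def_herm_def by simp
  obtain x0 where x0: "norm x0 = 1" and pos: "x0 \<bullet> (C *v x0) > 0"
    and min: "\<And>x. (x0 \<bullet> (C *v x0)) * (norm x)\<^sup>2 \<le> x \<bullet> (C *v x)"
    using pos_def_herm_quadratic_form_min[OF pd] by metis
  let ?E = "{r::real. \<exists>x. x \<noteq> 0 \<and> C *v x = complex_of_real r *s x}"
  have "C *v x0 = complex_of_real (x0 \<bullet> (C *v x0)) *s x0"
    unfolding of_real_smult_eq_scaleR
    by (rule hermitian_quadratic_form_minimiser_eigenvector[OF herm x0 min])
  moreover have "x0 \<noteq> 0" using x0 by auto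
  ultimately have "x0 \<bullet> (C *v x0) \<in> ?E" by (intro CollectI exI[of _ x0] conjI)
  moreover have "x0 \<bullet> (C *v x0) \<le> r" if r: "r \<in> ?E" for r
  proof -
    obtain x where x: "x \<noteq> 0" "C *v x = complex_of_real r *s x" using r by blast
    then have "x \<bullet> (C *v x) = r * (norm x)\<^sup>2"
      by (simp add: of_real_smult_eq_scaleR dot_square_norm)
    then have "(x0 \<bullet> (C *v x0)) * (norm x)\<^sup>2 \<le> r * (norm x)\<^sup>2" using min[of x] by simp
    then show ?thesis using x(1) by simp
  qed
  ultimately have "lambda_min C = x0 \<bullet> (C *v x0)"
    unfolding lambda_min_def by (rule Min_eqI[OF hermitian_finite_eigenvalues[OF herm], rotated])
  then show "lambda_min C > 0" and "lambda_min C * (norm x)\<^sup>2 \<le> Re (hip x (C *v x))"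
    using pos min[of x] unfolding Re_hip_eq_inner by simp_all
qed

lemma zero_in_ellipsoid: "0 \<in> ellipsoid A"
  unfolding ellipsoid_def hip_def by simp

lemma norm_le_eps_if_ellipsoid:
  assumes pd: "pos_def_herm C" and e: "e \<in> ellipsoid C"
  shows "norm e \<le> eps C"
proof -
  have "lambda_min C * (norm e)\<^sup>2 \<le> 1"
    using pos_def_herm_lambda_min(2)[OF pd, of e] e unfolding ellipsoid_def by simp
  then have "(norm e)\<^sup>2 \<le> 1 / lambda_min C"
    using pos_def_herm_lambda_min(1)[OF pd] by (simp add: field_simps)
  then have "norm e \<le> sqrt (1 / lambda_min C)" by (rule real_le_rsqrt)
  then show ?thesis unfolding eps_def by (simp add: real_sqrt_divide)
qed

lemma matrix_vector_mult_mat: "mat c *v (x::complex^'m) = c *s x"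
  unfolding vec_eq_iff matrix_vector_mult_def mat_def
  by (simp add: if_distrib[of "\<lambda>a. a * _"] cong: if_cong)

lemma lambda_min_scalar_mat: "lambda_min (mat (complex_of_real c) :: complex^'m^'m) = c"
proof -
  have "{r. \<exists>x::complex^'m. x \<noteq> 0 \<and> mat (complex_of_real c) *v x = complex_of_real r *s x}
        = {c}"
  proof (intro set_eqI iffI)
    fix r assume "r \<in> {r. \<exists>x::complex^'m. x \<noteq> 0 \<and>
        mat (complex_of_real c) *v x = complex_of_real r *s x}"
    then obtain x :: "complex^'m" and j
      where "x $ j \<noteq> 0" "complex_of_real c *s x = complex_of_real r *s x"
      unfolding matrix_vector_mult_mat vec_eq_iff by auto
    then show "r \<in> {c}"
      by (metis mult_cancel_right of_real_eq_iff singletonI vector_smult_component)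
  next
    fix r assume "r \<in> {c}"
    moreover have "axis undefined (1::complex) \<noteq> (0::complex^'m)" by (simp add: axis_eq_0_iff)
    ultimately show "r \<in> {r. \<exists>x::complex^'m. x \<noteq> 0 \<and>
        mat (complex_of_real c) *v x = complex_of_real r *s x}"
      unfolding matrix_vector_mult_mat by blast
  qed
  then show ?thesis unfolding lambda_min_def by simp
qed

lemma eps_scalar_mat: "\<mu> > 0 \<Longrightarrow> eps (mat (complex_of_real (1 / \<mu>\<^sup>2)) :: complex^'m^'m) = \<mu>"
  unfolding eps_def lambda_min_scalar_mat by (simp add: real_sqrt_divide)

lemma ellipsoid_scalar_mat:
  assumes "\<mu> > 0" and "norm e \<le> \<mu>"
  shows "e \<in> ellipsoid (mat (complex_of_real (1 / \<mu>\<^sup>2)))"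
proof -
  have "(norm e)\<^sup>2 / \<mu>\<^sup>2 \<le> 1" using assms by (simp add: power_mono)
  then show ?thesis unfolding ellipsoid_def matrix_vector_mult_mat hip_smult_right hip_self by simp
qed

subsection \<open>Robustness of the SINR under bounded channel errors\<close>

lemma sinr_nonneg: "sinr G w h \<sigma> g e \<ge> 0"
  unfolding sinr_def by (intro divide_nonneg_nonneg add_nonneg_nonneg sum_nonneg) auto

lemma sinr_le_signal:
  assumes "\<sigma> \<noteq> 0"
  shows "sinr G w h \<sigma> g e \<le> (cmod (hip (w g) (h + e)))\<^sup>2 / \<sigma>\<^sup>2"
  unfolding sinr_def using assms
  by (intro divide_left_mono add_nonneg_pos sum_nonneg mult_pos_pos) (auto intro: sum_nonneg)

lemma sinr_ge_if_zeta_le: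
  assumes \<sigma>: "\<sigma> \<noteq> 0" and t: "t \<ge> 0" and e: "norm e \<le> \<epsilon>"
    and zeta: "zeta G w h \<sigma> \<epsilon> g t \<le> cmod (hip (w g) h)"
  shows "t \<le> sinr G w h \<sigma> g e"
proof -
  define L where "L = {1..G} - {g}"
  define D where "D = (\<Sum>l\<in>L. (cmod (hip (w l) h) + \<epsilon> * norm (w l))\<^sup>2) + \<sigma>\<^sup>2"
  define D' where "D' = (\<Sum>l\<in>L. (cmod (hip (w l) (h + e)))\<^sup>2) + \<sigma>\<^sup>2"
  have err: "norm x * norm e \<le> \<epsilon> * norm x" for x :: "complex^'m"
    using e by (simp add: mult.commute mult_right_mono)
  have upper: "cmod (hip x (h + e)) \<le> cmod (hip x h) + \<epsilon> * norm x" for x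
    using norm_hip_add_right_le[of x h e] err[of x] by linarith
  have "D' \<le> D" unfolding D_def D'_def by (intro add_right_mono sum_mono power_mono upper) simp
  moreover have "D' > 0" unfolding D'_def using \<sigma> by (intro add_nonneg_pos sum_nonneg) auto
  ultimately have D_nonneg: "D \<ge> 0" by linarith
  have "sqrt t * sqrt D \<le> cmod (hip (w g) h) - \<epsilon> * norm (w g)"
    using zeta unfolding zeta_def D_def L_def by simp
  also have "\<dots> \<le> cmod (hip (w g) (h + e))"
    using norm_hip_add_right_ge[of "w g" h e] err[of "w g"] by linarith
  finally have signal: "sqrt t * sqrt D \<le> cmod (hip (w g) (h + e))" .
  have "t * D = (sqrt t * sqrt D)\<^sup>2" using t D_nonneg by (simp add: power_mult_distrib)
  also have "\<dots> \<le> (cmod (hip (w g) (h + e)))\<^sup>2" using power_mono[OF signal] t D_nonneg by simp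
  finally have "t * D \<le> (cmod (hip (w g) (h + e)))\<^sup>2" .
  with \<open>D' \<le> D\<close> t have "t * D' \<le> (cmod (hip (w g) (h + e)))\<^sup>2"
    by (meson mult_left_mono order_trans)
  then show ?thesis unfolding sinr_def using \<open>D' > 0\<close> unfolding D'_def L_def
    by (simp add: le_divide_eq)
qed

text \<open>The worst error of norm at most \<open>\<mu>\<close> is aligned with \<open>x\<close> and opposes the phase of
\<open>x\<^sup>H h\<close>; its length \<open>c = min \<mu> (|x\<^sup>H h| / \<parallel>x\<parallel>)\<close> stops once the signal vanishes.\<close>

lemma exists_error_norm_hip_eq:
  fixes x h :: "complex^'m"
  assumes "\<mu> \<ge> 0"
  shows "\<exists>e. norm e \<le> \<mu> \<and> cmod (hip x (h + e)) = max 0 (cmod (hip x h) - \<mu> * norm x)"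
proof (cases "hip x h = 0")
  case True
  then show ?thesis using assms by (intro exI[of _ 0]) simp
next
  case False
  define a where "a = hip x h"
  define n where "n = norm x"
  have a: "cmod a > 0" using False unfolding a_def by simp
  have n: "n > 0" using False unfolding n_def a_def hip_def by auto
  define c where "c = min \<mu> (cmod a / n)"
  have c: "0 \<le> c" "c * n \<le> cmod a" using assms n a unfolding c_def by (auto simp: min_def field_simps)
  define e where "e = (- (complex_of_real (c / (cmod a * n)) * a)) *s x"
  have "hip x (h + e) = a * complex_of_real (1 - c * n / cmod a)"
    unfolding e_def hip_add_right hip_smult_right hip_self a_def[symmetric] n_def[symmetric]
    using n a by (simp add: field_simps power2_eq_square)
  then have "cmod (hip x (h + e)) = cmod a * \<bar>1 - c * n / cmod a\<bar>"
    by (simp only: norm_mult norm_of_real)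
  also have "\<dots> = cmod a - c * n"
    using a c by (simp add: abs_of_nonneg field_simps)
  also have "\<dots> = max 0 (cmod a - \<mu> * n)"
    using n unfolding c_def by (auto simp: min_def max_def field_simps)
  finally have "cmod (hip x (h + e)) = max 0 (cmod (hip x h) - \<mu> * norm x)"
    unfolding a_def n_def .
  moreover have "norm e = c"
    unfolding e_def norm_smult_vec norm_minus_cancel norm_mult norm_of_real n_def[symmetric]
    using n a c by simp
  ultimately show ?thesis using c assms unfolding c_def by (intro exI[of _ e]) auto
qed

lemma zero_in_Wset: "\<gamma> \<ge> 0 \<Longrightarrow> (\<lambda>_. 0) \<in> Wset pc \<gamma> G"
  unfolding Wset_def by (cases pc) auto

lemma Wset_norm_power2_le:
  fixes w :: "nat \<Rightarrow> complex^'m"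
  assumes w: "w \<in> Wset pc \<gamma> G" and g: "g \<in> {1..G}"
  shows "(norm (w g))\<^sup>2 \<le> real CARD('m) * \<gamma>"
proof (cases pc)
  case SumPower
  have "(norm (w g))\<^sup>2 \<le> (\<Sum>g\<in>{1..G}. (norm (w g))\<^sup>2)"
    using g by (intro member_le_sum) auto
  also have "\<dots> \<le> \<gamma>" using w SumPower unfolding Wset_def by simp
  finally have "(norm (w g))\<^sup>2 \<le> \<gamma>" .
  moreover have "0 \<le> \<gamma>" using calculation by (rule order_trans[OF zero_le_power2])
  ultimately show ?thesis using mult_right_mono[of 1 "real CARD('m)" \<gamma>] by (simp add: Suc_le_eq)
next
  case PerAntenna
  have "(cmod (w g $ m))\<^sup>2 \<le> \<gamma>" for m
  proof -
    have "(cmod (w g $ m))\<^sup>2 \<le> (\<Sum>g\<in>{1..G}. (cmod (w g $ m))\<^sup>2)"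
      using g by (intro member_le_sum) auto
    also have "\<dots> \<le> \<gamma>" using w PerAntenna unfolding Wset_def by simp
    finally show ?thesis .
  qed
  then have "(\<Sum>m\<in>UNIV. (cmod (w g $ m))\<^sup>2) \<le> (\<Sum>m\<in>(UNIV::'m set). \<gamma>)"
    by (intro sum_mono)
  then show ?thesis unfolding norm_vec_power2 by simp
qed

subsection \<open>Max-min fair beamforming\<close>

locale robust_mmf =
  fixes G :: nat and N :: "nat \<Rightarrow> 'u set"
    and h :: "'u \<Rightarrow> nat \<Rightarrow> complex ^ 'm" and \<sigma> :: "'u \<Rightarrow> nat \<Rightarrow> real"
    and C :: "'u \<Rightarrow> nat \<Rightarrow> complex ^ 'm ^ 'm"
    and \<gamma> :: real and pc :: power_constraint
  assumes groups: "G \<ge> 1"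
    and users: "\<forall>g\<in>{1..G}. finite (N g) \<and> N g \<noteq> {}"
    and noise_pos: "\<forall>g\<in>{1..G}. \<forall>i\<in>N g. \<sigma> i g > 0"
    and C_pos_def: "\<forall>g\<in>{1..G}. \<forall>i\<in>N g. pos_def_herm (C i g)"
    and power_pos: "\<gamma> > 0"
begin

definition users_set :: "('u \<times> nat) set" where
  "users_set = {(i, g). g \<in> {1..G} \<and> i \<in> N g}"

definition worst_sinr :: "(nat \<Rightarrow> complex ^ 'm) \<Rightarrow> 'u \<Rightarrow> nat \<Rightarrow> real" where
  "worst_sinr w i g = (INF e\<in>ellipsoid (C i g). sinr G w (h i g) (\<sigma> i g) g e)"

definition mmf_objective :: "(nat \<Rightarrow> complex ^ 'm) \<Rightarrow> real" where
  "mmf_objective w = Min ((\<lambda>(i, g). worst_sinr w i g) ` users_set)"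

definition app_feasible :: "real \<Rightarrow> (nat \<Rightarrow> complex ^ 'm) \<Rightarrow> bool" where
  "app_feasible t w \<longleftrightarrow> (\<forall>g\<in>{1..G}. \<forall>i\<in>N g.
     zeta G w (h i g) (\<sigma> i g) (eps (C i g)) g t - cmod (hip (w g) (h i g)) \<le> 0)"

definition app_values :: "real set" where
  "app_values = {t. t \<ge> 0 \<and> (\<exists>w\<in>Wset pc \<gamma> G. app_feasible t w)}"

lemma V_MMF_eq: "V_MMF pc \<gamma> G N h \<sigma> C = (SUP w\<in>Wset pc \<gamma> G. mmf_objective w)"
  unfolding V_MMF_def mmf_objective_def worst_sinr_def users_set_def ..

lemma V_App_eq: "V_App pc \<gamma> G N h \<sigma> C = Sup app_values"
  unfolding V_App_def app_values_def app_feasible_def ..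

lemma finite_users_set: "finite users_set"
proof -
  have "users_set = (\<Union>g\<in>{1..G}. (\<lambda>i. (i, g)) ` N g)" unfolding users_set_def by auto
  then show ?thesis using users by simp
qed

lemma users_set_nonempty: "users_set \<noteq> {}"
  using users groups unfolding users_set_def by fastforce

lemma worst_sinr_le: "e \<in> ellipsoid (C i g) \<Longrightarrow> worst_sinr w i g \<le> sinr G w (h i g) (\<sigma> i g) g e"
  unfolding worst_sinr_def by (auto intro!: cINF_lower bdd_belowI[of _ 0] sinr_nonneg)

lemma worst_sinr_ge:
  assumes "\<And>e. e \<in> ellipsoid (C i g) \<Longrightarrow> t \<le> sinr G w (h i g) (\<sigma> i g) g e"
  shows "t \<le> worst_sinr w i g"
  unfolding worst_sinr_def using zero_in_ellipsoid assms by (intro cINF_greatest) auto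

lemma mmf_objective_le: "g \<in> {1..G} \<Longrightarrow> i \<in> N g \<Longrightarrow> mmf_objective w \<le> worst_sinr w i g"
  unfolding mmf_objective_def using finite_users_set by (intro Min_le) (auto simp: users_set_def)

lemma mmf_objective_ge:
  "(\<And>g i. g \<in> {1..G} \<Longrightarrow> i \<in> N g \<Longrightarrow> t \<le> worst_sinr w i g) \<Longrightarrow> t \<le> mmf_objective w"
  unfolding mmf_objective_def using finite_users_set users_set_nonempty
  by (auto simp: Min_ge_iff users_set_def)

lemma bdd_above_mmf_objective: "bdd_above (mmf_objective ` Wset pc \<gamma> G)"
proof -
  obtain i where i: "i \<in> N 1" using users groups by fastforce
  have \<sigma>: "\<sigma> i 1 \<noteq> 0" using noise_pos groups i by fastforce
  have "mmf_objective w \<le> real CARD('m) * \<gamma> * (norm (h i 1))\<^sup>2 / (\<sigma> i 1)\<^sup>2"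
    if w: "w \<in> Wset pc \<gamma> G" for w
  proof -
    have "mmf_objective w \<le> sinr G w (h i 1) (\<sigma> i 1) 1 0"
      using groups i
      by (intro order_trans[OF mmf_objective_le worst_sinr_le[OF zero_in_ellipsoid]]) auto
    also have "\<dots> \<le> (cmod (hip (w 1) (h i 1)))\<^sup>2 / (\<sigma> i 1)\<^sup>2"
      using sinr_le_signal[OF \<sigma>, of G w "h i 1" 1 0] by simp
    also have "(cmod (hip (w 1) (h i 1)))\<^sup>2 \<le> (norm (w 1) * norm (h i 1))\<^sup>2"
      by (intro power_mono norm_hip_le) simp
    also have "\<dots> \<le> real CARD('m) * \<gamma> * (norm (h i 1))\<^sup>2"
      unfolding power_mult_distrib using Wset_norm_power2_le[OF w] groups
      by (intro mult_right_mono) auto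
    finally show ?thesis by (simp add: divide_right_mono)
  qed
  then show ?thesis by (intro bdd_aboveI2)
qed

lemma app_feasible_imp_sinr_ge:
  assumes "t \<ge> 0" "app_feasible t w" "g \<in> {1..G}" "i \<in> N g" "e \<in> ellipsoid (C i g)"
  shows "t \<le> sinr G w (h i g) (\<sigma> i g) g e"
proof (rule sinr_ge_if_zeta_le)
  show "\<sigma> i g \<noteq> 0" using noise_pos assms(3,4) by fastforce
  show "norm e \<le> eps (C i g)"
    using C_pos_def assms(3-5) by (intro norm_le_eps_if_ellipsoid) auto
  show "zeta G w (h i g) (\<sigma> i g) (eps (C i g)) g t \<le> cmod (hip (w g) (h i g))"
    using assms(2-4) unfolding app_feasible_def by auto
qed (rule assms(1))

lemma app_feasible_le_V_MMF:
  assumes "t \<ge> 0" "w \<in> Wset pc \<gamma> G" "app_feasible t w"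
  shows "t \<le> V_MMF pc \<gamma> G N h \<sigma> C"
proof -
  have "t \<le> mmf_objective w"
    using assms app_feasible_imp_sinr_ge by (intro mmf_objective_ge worst_sinr_ge) auto
  also have "\<dots> \<le> V_MMF pc \<gamma> G N h \<sigma> C"
    unfolding V_MMF_eq by (rule cSUP_upper[OF assms(2) bdd_above_mmf_objective])
  finally show ?thesis .
qed

lemma zero_in_app_values: "0 \<in> app_values"
proof -
  have "app_feasible 0 (\<lambda>_. 0)" unfolding app_feasible_def zeta_def hip_def by simp
  then have "\<exists>w\<in>Wset pc \<gamma> G. app_feasible 0 w" using zero_in_Wset[OF less_imp_le[OF power_pos]]
    by (rule bexI)
  then show ?thesis unfolding app_values_def by simp
qed

lemma app_values_le_V_MMF: "t \<in> app_values \<Longrightarrow> t \<le> V_MMF pc \<gamma> G N h \<sigma> C"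
  unfolding app_values_def using app_feasible_le_V_MMF by blast

lemma V_App_le_V_MMF: "V_App pc \<gamma> G N h \<sigma> C \<le> V_MMF pc \<gamma> G N h \<sigma> C"
  unfolding V_App_eq using zero_in_app_values app_values_le_V_MMF by (intro cSup_least) auto

end

locale robust_mmf_single_group = robust_mmf G N h \<sigma> C \<gamma> pc
  for G N and h :: "'u \<Rightarrow> nat \<Rightarrow> complex ^ 'm" and \<sigma> C \<gamma> pc +
  fixes \<mu> :: real
  assumes single_group: "G = 1"
    and radius_pos: "\<mu> > 0"
    and C_scalar: "\<forall>i\<in>N 1. C i 1 = mat (complex_of_real (1 / \<mu>\<^sup>2))"
begin

lemma mmf_objective_le_worst_signal:
  assumes i: "i \<in> N 1"
  shows "mmf_objective w \<le> (max 0 (cmod (hip (w 1) (h i 1)) - \<mu> * norm (w 1)) / \<sigma> i 1)\<^sup>2"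
proof -
  obtain e where e: "norm e \<le> \<mu>"
    and signal: "cmod (hip (w 1) (h i 1 + e)) = max 0 (cmod (hip (w 1) (h i 1)) - \<mu> * norm (w 1))"
    using exists_error_norm_hip_eq[OF less_imp_le[OF radius_pos]] by blast
  have "mmf_objective w \<le> worst_sinr w i 1" using mmf_objective_le i single_group by simp
  also have "\<dots> \<le> sinr G w (h i 1) (\<sigma> i 1) 1 e"
    using i C_scalar ellipsoid_scalar_mat[OF radius_pos e] by (intro worst_sinr_le) simp
  also have "\<dots> = (max 0 (cmod (hip (w 1) (h i 1)) - \<mu> * norm (w 1)) / \<sigma> i 1)\<^sup>2"
    unfolding sinr_def single_group signal by (simp add: power_divide)
  finally show ?thesis .
qed

lemma mmf_objective_app_feasible:
  assumes pos: "mmf_objective w > 0"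
  shows "app_feasible (mmf_objective w) w"
  unfolding app_feasible_def
proof (intro ballI)
  fix g i assume "g \<in> {1..G}" "i \<in> N g"
  then have g: "g = 1" and i: "i \<in> N 1" using single_group by auto
  have \<sigma>: "\<sigma> i 1 > 0" using noise_pos i single_group by auto
  define s where "s = cmod (hip (w 1) (h i 1)) - \<mu> * norm (w 1)"
  have bound: "mmf_objective w \<le> (max 0 s / \<sigma> i 1)\<^sup>2"
    using mmf_objective_le_worst_signal[OF i] unfolding s_def .
  then have "s > 0" using pos by (cases "s > 0") auto
  with bound have "sqrt (mmf_objective w) \<le> s / \<sigma> i 1"
    using \<sigma> by (intro real_le_lsqrt) simp_all
  then have "sqrt (mmf_objective w) * \<sigma> i 1 \<le> s" using \<sigma> by (simp add: pos_le_divide_eq)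
  moreover have "eps (C i 1) = \<mu>" using C_scalar i eps_scalar_mat[OF radius_pos] by simp
  ultimately show "zeta G w (h i g) (\<sigma> i g) (eps (C i g)) g (mmf_objective w)
      - cmod (hip (w g) (h i g)) \<le> 0"
    using \<sigma> unfolding g zeta_def single_group s_def by simp
qed

lemma V_MMF_le_V_App: "V_MMF pc \<gamma> G N h \<sigma> C \<le> V_App pc \<gamma> G N h \<sigma> C"
  unfolding V_MMF_eq V_App_eq
proof (rule cSUP_least)
  fix w :: "nat \<Rightarrow> complex ^ 'm" assume w: "w \<in> Wset pc \<gamma> G"
  have bdd: "bdd_above app_values" using app_values_le_V_MMF by (rule bdd_aboveI)
  show "mmf_objective w \<le> Sup app_values"
  proof (cases "mmf_objective w > 0")
    case True
    then have "mmf_objective w \<in> app_values"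
      unfolding app_values_def using w mmf_objective_app_feasible by auto
    then show ?thesis using bdd by (rule cSup_upper)
  next
    case False
    then have "mmf_objective w \<le> 0" by simp
    also have "0 \<le> Sup app_values" using zero_in_app_values bdd by (rule cSup_upper)
    finally show ?thesis .
  qed
qed (use zero_in_Wset[OF less_imp_le[OF power_pos]] in auto)

end

theorem mainTheorem4:
  fixes G :: nat and N :: "nat \<Rightarrow> 'u set"
    and h :: "'u \<Rightarrow> nat \<Rightarrow> complex ^ 'm" and \<sigma> :: "'u \<Rightarrow> nat \<Rightarrow> real"
    and C :: "'u \<Rightarrow> nat \<Rightarrow> complex ^ 'm ^ 'm"
    and \<gamma> :: real and pc :: power_constraint
  assumes G: "G \<ge> 1"
    and N: "\<forall>g\<in>{1..G}. finite (N g) \<and> N g \<noteq> {}"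
    and sig: "\<forall>g\<in>{1..G}. \<forall>i\<in>N g. \<sigma> i g > 0"
    and Cpd: "\<forall>g\<in>{1..G}. \<forall>i\<in>N g. pos_def_herm (C i g)"
    and gam: "\<gamma> > 0"
  shows
    "(\<forall>t w. t \<ge> 0 \<longrightarrow> w \<in> Wset pc \<gamma> G \<longrightarrow>
        (\<forall>g\<in>{1..G}. \<forall>i\<in>N g.
           zeta G w (h i g) (\<sigma> i g) (eps (C i g)) g t - cmod (hip (w g) (h i g)) \<le> 0) \<longrightarrow>
        (\<forall>g\<in>{1..G}. \<forall>i\<in>N g. \<forall>e\<in>ellipsoid (C i g).
           sinr G w (h i g) (\<sigma> i g) g e \<ge> t))
     \<and> V_App pc \<gamma> G N h \<sigma> C \<le> V_MMF pc \<gamma> G N h \<sigma> C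
     \<and> (\<forall>\<mu>::real. G = 1 \<and> \<mu> > 0 \<and>
          (\<forall>i\<in>N 1. C i 1 = mat (complex_of_real (1 / \<mu>\<^sup>2))) \<longrightarrow>
          V_App pc \<gamma> G N h \<sigma> C = V_MMF pc \<gamma> G N h \<sigma> C)"
proof -
  interpret robust_mmf G N h \<sigma> C \<gamma> pc using assms by unfold_locales
  show ?thesis
  proof (intro conjI allI impI ballI)
    fix t w g i e
    assume "t \<ge> 0" and "\<forall>g\<in>{1..G}. \<forall>i\<in>N g.
        zeta G w (h i g) (\<sigma> i g) (eps (C i g)) g t - cmod (hip (w g) (h i g)) \<le> 0"
      and "g \<in> {1..G}" "i \<in> N g" "e \<in> ellipsoid (C i g)"
    then show "sinr G w (h i g) (\<sigma> i g) g e \<ge> t"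
      by (intro app_feasible_imp_sinr_ge) (simp_all add: app_feasible_def)
  next
    show "V_App pc \<gamma> G N h \<sigma> C \<le> V_MMF pc \<gamma> G N h \<sigma> C" by (rule V_App_le_V_MMF)
  next
    fix \<mu> :: real
    assume "G = 1 \<and> \<mu> > 0 \<and> (\<forall>i\<in>N 1. C i 1 = mat (complex_of_real (1 / \<mu>\<^sup>2)))"
    then interpret robust_mmf_single_group G N h \<sigma> C \<gamma> pc \<mu> by unfold_locales auto
    show "V_App pc \<gamma> G N h \<sigma> C = V_MMF pc \<gamma> G N h \<sigma> C"
      using V_App_le_V_MMF V_MMF_le_V_App by (rule antisym)
  qed
qed

end
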